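(* Let $n$ be a power of 2 and $A\subseteq\{0,1\}^{\log n}$ arbitrary. For every $\epsilon>0$, $P_A=\{x\in\{0,1\}^n:\exists y\in A,\ x=h(y)\}$ has a classical nonadaptive property tester with distance parameter $\epsilon$ and one-sided error making $O(1/\epsilon+\log n)$ queries.
   Context: Logarithms are base 2; positions $i$ are identified with vectors in $\mathbb{F}_2^{\log n}$ and $h(y)_i=y\cdot i$ over $\mathbb{F}_2$ (Hadamard code). $x$ is $\epsilon$-far from $P$ if it differs from every element of $P$ in more than $\epsilon n$ positions. A classical property tester with distance parameter $\epsilon$ accepts every $x\in P$ with probability $\ge 2/3$ and every $\epsilon$-far $x$ with probability $\le 1/3$; one-sided error means elements of $P$ are accepted with probability $1$; nonadaptive means the query positions are chosen independently of previous answers. *)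

theory Defs
  imports "HOL-Probability.Probability_Mass_Function"
begin

(* Positions i < 2^k are identified with bit vectors in F_2^k via their binary digits;
   y in {0,1}^k is likewise encoded as a natural number y < 2^k.
   h(y)_i = y . i over F_2. *)
definition hadamard :: "nat \<Rightarrow> nat \<Rightarrow> nat \<Rightarrow> bool" where
  "hadamard k y i = odd (card {j. j < k \<and> bit y j \<and> bit i j})"

(* P_A = { x in {0,1}^n : exists y in A, x = h(y) },  n = 2^k; strings are functions
   nat => bool of which only positions < n matter *)
definition PA :: "nat \<Rightarrow> nat set \<Rightarrow> (nat \<Rightarrow> bool) set" where
  "PA k A = {x. \<exists>y\<in>A. \<forall>i<2^k. x i = hadamard k y i}"

definition eps_far :: "nat \<Rightarrow> real \<Rightarrow> (nat \<Rightarrow> bool) set \<Rightarrow> (nat \<Rightarrow> bool) \<Rightarrow> bool" where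
  "eps_far n \<epsilon> P x \<longleftrightarrow> (\<forall>z\<in>P. real (card {i. i < n \<and> x i \<noteq> z i}) > \<epsilon> * real n)"

(* A nonadaptive randomized tester: a probability distribution over pairs
   (list of query positions, decision on the answers). The query positions are chosen
   before any answer is seen, so the tester is nonadaptive. *)
type_synonym na_tester = "(nat list \<times> (bool list \<Rightarrow> bool)) pmf"

definition accept_prob :: "na_tester \<Rightarrow> (nat \<Rightarrow> bool) \<Rightarrow> real" where
  "accept_prob T x = measure_pmf.prob T {(qs, d). d (map x qs)}"

definition one_sided_na_tester ::
  "nat \<Rightarrow> real \<Rightarrow> (nat \<Rightarrow> bool) set \<Rightarrow> real \<Rightarrow> na_tester \<Rightarrow> bool" where
  "one_sided_na_tester n \<epsilon> P q T \<longleftrightarrow>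
     (\<forall>(qs, d) \<in> set_pmf T. real (length qs) \<le> q \<and> set qs \<subseteq> {..<n}) \<and>
     (\<forall>x\<in>P. accept_prob T x = 1) \<and>
     (\<forall>x. eps_far n \<epsilon> P x \<longrightarrow> accept_prob T x \<le> 1/3)"

end

theory Submission
  imports Defs
begin

(* Since h(y) at position 2^j is the j-th bit of y, reading x at the k positions 2^j recovers y
   whenever x = h(y).  The tester decodes a candidate y in this way, rejects unless y is in A,
   and then compares x with h(y) at m = O(1/eps) independent uniform positions.  If x is eps-far from P_A and the decoded y lies in A, then h(y) is in P_A
   and disagrees with x on more than an eps-fraction of the positions, so all m samples miss the
   disagreements with probability at most (1 - eps)^m <= exp(-eps m) <= 1/3. *)

lemma hadamard_exp: "j < k \<Longrightarrow> hadamard k y (2 ^ j) = bit y j"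
proof -
  assume "j < k"
  then have "{j'. j' < k \<and> bit y j' \<and> bit ((2::nat) ^ j) j'} = (if bit y j then {j} else {})"
    by (auto simp: bit_exp_iff)
  then show ?thesis
    unfolding hadamard_def by simp
qed

definition decode :: "nat \<Rightarrow> (nat \<Rightarrow> bool) \<Rightarrow> nat" where
  "decode k x = horner_sum of_bool 2 (map (\<lambda>j. x (2 ^ j)) [0..<k])"

lemma decode_hadamard:
  assumes "y < 2 ^ k" and "\<forall>i<2 ^ k. x i = hadamard k y i"
  shows "decode k x = y"
proof -
  have "map (\<lambda>j. x (2 ^ j)) [0..<k] = map (bit y) [0..<k]"
    using assms(2) by (auto simp: hadamard_exp)
  then show ?thesis
    unfolding decode_def using assms(1)
    by (simp only: horner_sum_bit_eq_take_bit take_bit_nat_eq_self)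
qed

definition hadamard_tester :: "nat \<Rightarrow> nat set \<Rightarrow> nat \<Rightarrow> na_tester" where
  "hadamard_tester k A m =
     map_pmf (\<lambda>rs. (map (\<lambda>j. 2 ^ j) [0..<k] @ rs,
                    \<lambda>ans. let y = horner_sum of_bool 2 (take k ans)
                          in y \<in> A \<and> drop k ans = map (hadamard k y) rs))
       (pmf_of_set {rs. set rs \<subseteq> {..<2 ^ k} \<and> length rs = m})"

lemma measure_pmf_of_set_lists_subset:
  assumes "finite S" and "S \<noteq> {}"
  shows "measure_pmf.prob (pmf_of_set {xs. set xs \<subseteq> S \<and> length xs = m}) {xs. set xs \<subseteq> B}
           = (card (S \<inter> B) / card S) ^ m"
proof -
  let ?L = "\<lambda>S. {xs. set xs \<subseteq> S \<and> length xs = m}"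
  obtain s where "s \<in> S"
    using assms(2) by blast
  then have "replicate m s \<in> ?L S"
    by auto
  then have "measure_pmf.prob (pmf_of_set (?L S)) {xs. set xs \<subseteq> B}
               = card (?L S \<inter> {xs. set xs \<subseteq> B}) / card (?L S)"
    using assms(1) by (intro measure_pmf_of_set) (auto simp: finite_lists_length_eq)
  also have "?L S \<inter> {xs. set xs \<subseteq> B} = ?L (S \<inter> B)"
    by auto
  also have "card (?L (S \<inter> B)) = card (S \<inter> B) ^ m"
    using assms(1) by (intro card_lists_length_eq) simp
  also have "card (?L S) = card S ^ m"
    using assms(1) by (rule card_lists_length_eq)
  finally show ?thesis
    by (simp add: power_divide)
qed

lemma accept_prob_hadamard_tester:
  "accept_prob (hadamard_tester k A m) x =
     (if decode k x \<in> A
      then (card {i. i < 2 ^ k \<and> x i = hadamard k (decode k x) i} / 2 ^ k) ^ m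
      else 0)"
proof -
  let ?B = "{i. x i = hadamard k (decode k x) i}"
  have "accept_prob (hadamard_tester k A m) x =
          measure_pmf.prob (pmf_of_set {rs. set rs \<subseteq> {..<2 ^ k} \<and> length rs = m})
            {rs. decode k x \<in> A \<and> set rs \<subseteq> ?B}"
    unfolding accept_prob_def hadamard_tester_def decode_def
    by (simp add: vimage_def comp_def subset_iff Let_def Ball_def)
  also have "\<dots> = (if decode k x \<in> A then (card ({..<2 ^ k} \<inter> ?B) / card {..<2 ^ k :: nat}) ^ m
                   else 0)"
  proof (cases "decode k x \<in> A")
    case True
    have "{..<2 ^ k :: nat} \<noteq> {}"
      by (simp add: lessThan_empty_iff)
    then show ?thesis
      using True measure_pmf_of_set_lists_subset[of "{..<2 ^ k}" m ?B] by simp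
  qed simp
  finally show ?thesis
    by (simp add: Int_def)
qed

lemma hadamard_tester_queries:
  assumes "(qs, d) \<in> set_pmf (hadamard_tester k A m)"
  shows "length qs = k + m" and "set qs \<subseteq> {..<2 ^ k}"
proof -
  let ?L = "{rs. set rs \<subseteq> {..<2 ^ k :: nat} \<and> length rs = m}"
  have "set_pmf (pmf_of_set ?L) = ?L"
    by (rule set_pmf_of_set) (auto simp: finite_lists_length_eq intro!: exI[of _ "replicate m 0"])
  then obtain rs where "rs \<in> ?L" and "qs = map (\<lambda>j. 2 ^ j) [0..<k] @ rs"
    using assms unfolding hadamard_tester_def by auto
  then show "length qs = k + m" and "set qs \<subseteq> {..<2 ^ k}"
    by auto
qed

lemma hadamard_tester_complete:
  assumes "A \<subseteq> {..<2 ^ k}" and "x \<in> PA k A"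
  shows "accept_prob (hadamard_tester k A m) x = 1"
proof -
  obtain y where "y \<in> A" and x: "\<forall>i<2 ^ k. x i = hadamard k y i"
    using assms(2) unfolding PA_def by auto
  moreover have "decode k x = y"
    using decode_hadamard x \<open>y \<in> A\<close> assms(1) by auto
  moreover have "{i. i < 2 ^ k \<and> x i = hadamard k y i} = {..<2 ^ k}"
    using x by auto
  ultimately show ?thesis
    by (simp add: accept_prob_hadamard_tester)
qed

lemma eps_far_agreement_less:
  assumes "eps_far n \<epsilon> P x" and "z \<in> P"
  shows "real (card {i. i < n \<and> x i = z i}) < (1 - \<epsilon>) * n"
proof -
  have "card {i. i < n \<and> x i = z i} + card {i. i < n \<and> x i \<noteq> z i}
          = card ({i. i < n \<and> x i = z i} \<union> {i. i < n \<and> x i \<noteq> z i})"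
    by (rule card_Un_disjoint[symmetric]) auto
  also have "{i. i < n \<and> x i = z i} \<union> {i. i < n \<and> x i \<noteq> z i} = {..<n}"
    by auto
  finally have "card {i. i < n \<and> x i = z i} + card {i. i < n \<and> x i \<noteq> z i} = n"
    by simp
  moreover have "real (card {i. i < n \<and> x i \<noteq> z i}) > \<epsilon> * n"
    using assms unfolding eps_far_def by blast
  ultimately show ?thesis
    by (simp add: algebra_simps flip: of_nat_add)
qed

lemma one_minus_power_le_one_third:
  fixes e :: real
  assumes "e \<le> 1" and "2 \<le> e * m"
  shows "(1 - e) ^ m \<le> 1 / 3"
proof -
  have "(1 - e) ^ m \<le> exp (- e) ^ m"
    using assms(1) by (intro power_mono) (auto simp: exp_ge_add_one_self[of "- e", simplified])
  also have "\<dots> = exp (- (e * m))"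
    by (simp add: exp_of_nat_mult[symmetric] mult.commute)
  also have "\<dots> \<le> exp (- 2)"
    using assms(2) by simp
  also have "\<dots> \<le> 1 / 3"
    using exp_ge_add_one_self[of 2] by (simp add: exp_minus field_simps)
  finally show ?thesis .
qed

(* For eps >= 1 farness already forces the decoded y out of A, so no samples are needed. *)
lemma hadamard_tester_sound:
  assumes far: "eps_far (2 ^ k) \<epsilon> (PA k A) x" and m: "\<epsilon> < 1 \<Longrightarrow> 2 \<le> \<epsilon> * m"
  shows "accept_prob (hadamard_tester k A m) x \<le> 1 / 3"
proof (cases "decode k x \<in> A")
  case False
  then show ?thesis
    by (simp add: accept_prob_hadamard_tester)
next
  case True
  let ?agree = "real (card {i. i < 2 ^ k \<and> x i = hadamard k (decode k x) i})"
  have "hadamard k (decode k x) \<in> PA k A"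
    using True unfolding PA_def by auto
  then have agree: "?agree < (1 - \<epsilon>) * 2 ^ k"
    using eps_far_agreement_less[OF far] by simp
  then have "0 < (1 - \<epsilon>) * 2 ^ k"
    by (rule le_less_trans[OF of_nat_0_le_iff])
  then have "\<epsilon> < 1"
    by (simp add: zero_less_mult_iff)
  have "accept_prob (hadamard_tester k A m) x = (?agree / 2 ^ k) ^ m"
    using True by (simp add: accept_prob_hadamard_tester)
  also have "\<dots> \<le> (1 - \<epsilon>) ^ m"
    using agree by (intro power_mono) (simp_all add: field_simps)
  also have "\<dots> \<le> 1 / 3"
    using \<open>\<epsilon> < 1\<close> m by (intro one_minus_power_le_one_third) simp_all
  finally show ?thesis .
qed

theorem mainTheorem4:
  shows "\<exists>C>0. \<forall>(k::nat) (A::nat set) (\<epsilon>::real).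
           A \<subseteq> {..<2^k} \<longrightarrow> \<epsilon> > 0 \<longrightarrow>
           (\<exists>T. one_sided_na_tester (2^k) \<epsilon> (PA k A) (C * (1/\<epsilon> + real k)) T)"
proof (intro exI[of _ 3] conjI allI impI)
  fix k :: nat and A :: "nat set" and \<epsilon> :: real
  assume A: "A \<subseteq> {..<2^k}" and "\<epsilon> > 0"
  define m where "m = nat \<lfloor>3 / \<epsilon>\<rfloor>"
  have "real m = \<lfloor>3 / \<epsilon>\<rfloor>"
    unfolding m_def using \<open>\<epsilon> > 0\<close> by simp
  then have m_lower: "3 / \<epsilon> - 1 \<le> real m" and "real m \<le> 3 / \<epsilon>"
    by linarith+
  then have queries: "real (k + m) \<le> 3 * (1 / \<epsilon> + real k)"
    by simp
  have samples: "2 \<le> \<epsilon> * m" if "\<epsilon> < 1"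
  proof -
    have "3 - \<epsilon> \<le> \<epsilon> * m"
      using m_lower \<open>\<epsilon> > 0\<close> by (simp add: field_simps)
    then show ?thesis
      using that by linarith
  qed
  have "one_sided_na_tester (2^k) \<epsilon> (PA k A) (3 * (1 / \<epsilon> + real k)) (hadamard_tester k A m)"
    unfolding one_sided_na_tester_def
    using queries hadamard_tester_complete[OF A] hadamard_tester_sound[OF _ samples]
    by (auto dest: hadamard_tester_queries)
  then show "\<exists>T. one_sided_na_tester (2^k) \<epsilon> (PA k A) (3 * (1/\<epsilon> + real k)) T"
    by blast
qed simp

end
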